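(* Let $k\in\mathbb{N}$, $0<\delta\le1$, $z_1,\dots,z_k\ge1$ and $\lambda_1,\dots,\lambda_k>0$. There is a constant $c=c(k,\boldsymbol{\lambda})$ such that: (a) If $R\ge\max\{\Lambda,\delta(z_1+\cdots+z_k)\}$, then $$\mathrm{Prob}(\mathscr{H}^k(R,\delta))\gg_{k,\boldsymbol{\lambda},\delta}\frac{e^{-c|\alpha(R)|}}{\sqrt{R}}\prod_{i=1}^k\exp\{-Q(e^{\alpha(R)\lambda_i})z_i\}.$$ (b) If $R\ge\Lambda$, then $$\mathrm{Prob}(\mathscr{H}^k(R))\ll_{k,\boldsymbol{\lambda}}\frac{e^{c|\alpha(R)|}}{\sqrt{R}}\prod_{i=1}^k\exp\{-Q(e^{\alpha(R)\lambda_i})z_i\}.$$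
   Context: $\Lambda=\max_i\lambda_i$; $Q(u)=u\log u-u+1$. $\mathrm{Prob}$ denotes the $k$-dimensional Poisson distribution with parameters $z_1,\dots,z_k$, which gives each $(r_1,\dots,r_k)\in(\mathbb{N}\cup\{0\})^k$ the probability $\prod_{i=1}^ke^{-z_i}z_i^{r_i}/r_i!$. For $R\ge\Lambda$: $\mathscr{H}^k(R)=\{\mathbf{r}\in(\mathbb{N}\cup\{0\})^k: R-\Lambda<\sum_i\lambda_ir_i\le R\}$; $\alpha(R)$ is the real number defined by $\sum_{i=1}^k\lambda_ie^{\alpha(R)\lambda_i}z_i=R$; and $\mathscr{H}^k(R,\delta)$ is the set of $\mathbf{r}\in\mathscr{H}^k(R)$ with $|r_i-e^{\alpha(R)\lambda_i}z_i|\le\frac{\Lambda}{\lambda_i}\max\{k,\delta\sqrt{e^{\alpha(R)\lambda_i}z_i}\}$ for all $1\le i\le k$. *)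

theory Defs
  imports Complex_Main
begin

text \<open>Indices run over {..<k} (i.e. 0..k-1 instead of 1..k).
  Tuples r are functions nat => nat vanishing outside {..<k}.\<close>

definition Lam :: "nat \<Rightarrow> (nat \<Rightarrow> real) \<Rightarrow> real" where
  "Lam k lam = Max (lam ` {..<k})"

definition Qf :: "real \<Rightarrow> real" where
  "Qf u = u * ln u - u + 1"

definition alpha :: "nat \<Rightarrow> (nat \<Rightarrow> real) \<Rightarrow> (nat \<Rightarrow> real) \<Rightarrow> real \<Rightarrow> real" where
  "alpha k lam z R = (THE a. (\<Sum>i<k. lam i * exp (a * lam i) * z i) = R)"

definition poisson_prob :: "nat \<Rightarrow> (nat \<Rightarrow> real) \<Rightarrow> (nat \<Rightarrow> nat) \<Rightarrow> real" where
  "poisson_prob k z r = (\<Prod>i<k. exp (- z i) * z i ^ r i / fact (r i))"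

definition Prob :: "nat \<Rightarrow> (nat \<Rightarrow> real) \<Rightarrow> (nat \<Rightarrow> nat) set \<Rightarrow> real" where
  "Prob k z A = (\<Sum>r\<in>A. poisson_prob k z r)"

definition HH :: "nat \<Rightarrow> (nat \<Rightarrow> real) \<Rightarrow> real \<Rightarrow> (nat \<Rightarrow> nat) set" where
  "HH k lam R = {r. (\<forall>i\<ge>k. r i = 0) \<and>
      R - Lam k lam < (\<Sum>i<k. lam i * real (r i)) \<and> (\<Sum>i<k. lam i * real (r i)) \<le> R}"

definition HHd :: "nat \<Rightarrow> (nat \<Rightarrow> real) \<Rightarrow> (nat \<Rightarrow> real) \<Rightarrow> real \<Rightarrow> real \<Rightarrow> (nat \<Rightarrow> nat) set" where
  "HHd k lam z R \<delta> = {r \<in> HH k lam R. \<forall>i<k.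
      \<bar>real (r i) - exp (alpha k lam z R * lam i) * z i\<bar>
        \<le> Lam k lam / lam i * max (real k) (\<delta> * sqrt (exp (alpha k lam z R * lam i) * z i))}"

end

(*
  Tilting each Poisson factor by e^(alpha lambda_i) rewrites Prob(r) as
  prod_i exp(-Q(e^(alpha lambda_i)) z_i) * e^(-alpha (sum_i lambda_i r_i - R)) * prod_i Poi(w_i)(r_i)
  with means w_i = e^(alpha lambda_i) z_i, and alpha = alpha(R) is exactly the choice making
  sum_i lambda_i w_i = R.  On H^k(R) the middle factor lies between e^(-Lambda|alpha|) and
  e^(Lambda|alpha|), so both estimates reduce to bounding the mass that the independent
  Poisson(w_i) laws give to H^k(R) and to H^k(R,delta) by constants times 1/sqrt R.
  Let j be the index of the largest mean, so w_j >= R/(k Lambda).  Upper bound: fixing the other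
  coordinates, r_j ranges over at most Lambda/lambda_j + 1 values, each of Poisson mass at most
  2/sqrt(w_j) by Stirling.  Lower bound: let each other coordinate run through a window of
  length about delta sqrt(w_i)/k just below w_i (mass >> delta/k by Stirling) and take r_j as
  large as the constraint sum_i lambda_i r_i <= R allows; then r_j stays within O(sqrt w_j) of
  w_j, so its mass is >> 1/sqrt(w_j) >= sqrt(lambda_min / R).
*)

theory Submission
  imports Defs "HOL-Library.FuncSet"
begin

section \<open>Stirling bounds\<close>

lemma ln_add_one_ge_quadratic:
  fixes x :: real assumes "0 \<le> x" shows "x - x^2/2 \<le> ln (1 + x)"
proof -
  let ?f = "\<lambda>t::real. ln (1 + t) - t + t^2/2"
  have "?f 0 \<le> ?f x"
  proof (rule DERIV_nonneg_imp_increasing_open[OF assms])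
    fix t :: real assume t: "0 < t" "t < x"
    have "DERIV ?f t :> (1/(1 + t) - 1 + t)"
      using t by (auto intro!: derivative_eq_intros)
    moreover have "1/(1 + t) - 1 + t \<ge> 0"
      using t by (simp add: field_simps)
    ultimately show "\<exists>y. DERIV ?f t :> y \<and> y \<ge> 0" by blast
  qed (intro continuous_intros, auto)
  thus ?thesis by simp
qed

lemma ln_add_one_le_cubic:
  fixes x :: real assumes "0 \<le> x" shows "ln (1 + x) \<le> x - x^2/2 + x^3/3"
proof -
  let ?f = "\<lambda>t::real. t - t^2/2 + t^3/3 - ln (1 + t)"
  have "?f 0 \<le> ?f x"
  proof (rule DERIV_nonneg_imp_increasing_open[OF assms])
    fix t :: real assume t: "0 < t" "t < x"
    have "DERIV ?f t :> (1 - t + t^2 - 1/(1 + t))"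
      using t by (auto intro!: derivative_eq_intros simp: power2_eq_square)
    moreover have "1 - t + t^2 - 1/(1 + t) = t^3/(1 + t)"
      using t by (simp add: field_simps power2_eq_square power3_eq_cube)
    ultimately show "\<exists>y. DERIV ?f t :> y \<and> y \<ge> 0" using t by auto
  qed (intro continuous_intros, auto)
  thus ?thesis by simp
qed

lemma stirling_step_error:
  fixes n :: real assumes n: "1 \<le> n"
  shows "\<bar>(n + 1/2) * ln (1 + 1/n) - 1\<bar> \<le> 1/(2*n*(n + 1))"
proof -
  define x where "x = 1/n"
  have x: "0 < x" "x \<le> 1" "n = 1/x" using n by (auto simp: x_def)
  have "(1/x + 1/2) * (x - x^2/2) \<le> (1/x + 1/2) * ln (1 + x)"
    using ln_add_one_ge_quadratic x by (intro mult_left_mono) auto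
  moreover have "(1/x + 1/2) * ln (1 + x) \<le> (1/x + 1/2) * (x - x^2/2 + x^3/3)"
    using ln_add_one_le_cubic x by (intro mult_left_mono) auto
  moreover have "(1/x + 1/2) * (x - x^2/2) - 1 = -(x^2/4)"
    using x by (simp add: field_simps power2_eq_square)
  moreover have "(1/x + 1/2) * (x - x^2/2 + x^3/3) - 1 = x^2/12 + x^3/6"
    using x by (simp add: field_simps power2_eq_square power3_eq_cube)
  moreover have "x^3/6 \<le> x^2/6"
    using x by (simp add: power2_eq_square power3_eq_cube mult_left_le_one_le)
  moreover have "x^2/4 \<le> 1/(2*n*(n + 1))"
  proof -
    have "x^2/4 = 1/(4*n*n)" using n by (simp add: x_def power2_eq_square)
    also have "\<dots> \<le> 1/(2*n*(n + 1))" using n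
      by (intro divide_left_mono) (auto simp: algebra_simps intro!: mult_pos_pos add_pos_pos)
    finally show ?thesis .
  qed
  ultimately show ?thesis
    unfolding abs_le_iff x_def[symmetric] using x(3) by (simp only:) argo
qed

text \<open>The correction terms \<open>\<plusminus>1/(2m)\<close> make the induction close: their increments
  telescope against the error bound of the previous lemma.\<close>

lemma ln_fact_bounds:
  fixes m :: nat assumes "1 \<le> m"
  shows "(real m + 1/2) * ln m - m + 1/2 + 1/(2 * real m) \<le> ln (fact m)"
    and "ln (fact m) \<le> (real m + 1/2) * ln m - m + 3/2 - 1/(2 * real m)"
proof -
  have "(real m + 1/2) * ln m - m + 1/2 + 1/(2 * real m) \<le> ln (fact m)
      \<and> ln (fact m) \<le> (real m + 1/2) * ln m - m + 3/2 - 1/(2 * real m)"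
    using assms
  proof (induction m rule: nat_induct_at_least)
    case base
    then show ?case by simp
  next
    case (Suc m)
    define n where "n = real m"
    have n: "1 \<le> n" using Suc.hyps by (simp add: n_def)
    define L where "L = ln (1 + 1/n)"
    have ln_succ: "ln (n + 1) = ln n + L"
    proof -
      have "n + 1 = n * (1 + 1/n)" and "0 < 1 + 1/n" using n by (simp_all add: field_simps)
      thus ?thesis using n unfolding L_def by (simp add: ln_mult)
    qed
    have fact_succ: "ln (fact (Suc m)) = ln (fact m) + ln (n + 1)"
      using ln_mult[of "fact m" "n + 1"] n by (simp add: n_def algebra_simps)
    have "\<bar>(n + 1/2) * L - 1\<bar> \<le> 1/(2*n*(n + 1))"
      using stirling_step_error[OF n] by (simp add: L_def)
    moreover have "1/(2*n) - 1/(2*(n + 1)) = 1/(2*n*(n + 1))"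
      using n by (simp add: field_simps)
    moreover have "(n + 1 + 1/2) * (ln n + L) = (n + 1/2) * ln n + ln n + (n + 1/2) * L + L"
      by (simp add: algebra_simps)
    ultimately show ?case
      using Suc.IH
      unfolding fact_succ of_nat_Suc n_def[symmetric] add.commute[of 1 n] ln_succ abs_le_iff
      by argo
  qed
  then show "(real m + 1/2) * ln m - m + 1/2 + 1/(2 * real m) \<le> ln (fact m)"
    and "ln (fact m) \<le> (real m + 1/2) * ln m - m + 3/2 - 1/(2 * real m)" by auto
qed

section \<open>Poisson masses\<close>

definition poisson_mass :: "real \<Rightarrow> nat \<Rightarrow> real" where
  "poisson_mass w m = exp (- w) * w ^ m / fact m"

lemma poisson_mass_pos: "0 < w \<Longrightarrow> 0 < poisson_mass w m"
  by (simp add: poisson_mass_def)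

lemma poisson_mass_nonneg: "0 \<le> w \<Longrightarrow> 0 \<le> poisson_mass w m"
  by (simp add: poisson_mass_def)

lemma ln_poisson_mass:
  assumes "0 < w" shows "ln (poisson_mass w m) = - w + m * ln w - ln (fact m)"
  using assms by (simp add: poisson_mass_def ln_mult ln_div ln_realpow)

lemma sqrt_le_exp_quarter: "0 \<le> w \<Longrightarrow> sqrt w \<le> exp (w/4)"
proof -
  assume w: "0 \<le> w"
  have "(1 - sqrt w / 2)^2 \<ge> 0" by simp
  hence "sqrt w \<le> 1 + w/4" using w by (simp add: power2_eq_square algebra_simps)
  also have "\<dots> \<le> exp (w/4)" using exp_ge_add_one_self[of "w/4"] by simp
  finally show ?thesis .
qed

lemma ln_le_div_exp_1: "0 < (y::real) \<Longrightarrow> ln y \<le> y / exp 1"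
  using ln_le_minus_one[of "y / exp 1"] by (simp add: ln_div)

lemma exp_half_ln: "0 < (x::real) \<Longrightarrow> exp (ln x / 2) = sqrt x"
  by (simp add: powr_half_sqrt[symmetric] powr_def)

lemma ln_poisson_mass_le:
  assumes "0 < w" "1 \<le> m"
  shows "ln (poisson_mass w m) \<le> - w + m * ln (w / m) + m - ln m / 2"
proof -
  have correction_nonneg: "0 \<le> 1 / (real m * 2)" by simp
  show ?thesis using ln_fact_bounds(1)[OF assms(2)] assms
    by (simp add: ln_poisson_mass ln_div algebra_simps) (use correction_nonneg in linarith)
qed

lemma ln_poisson_mass_ge:
  assumes "0 < w" "1 \<le> m"
  shows "- w - m * ln (m / w) + m - 3/2 - ln m / 2 \<le> ln (poisson_mass w m)"
proof -
  have correction_nonneg: "0 \<le> 1 / (real m * 2)" by simp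
  show ?thesis using ln_fact_bounds(2)[OF assms(2)] assms
    by (simp add: ln_poisson_mass ln_div algebra_simps) (use correction_nonneg in linarith)
qed

lemma poisson_mass_le: assumes w: "0 < w" shows "poisson_mass w m \<le> 2 / sqrt w"
proof -
  have exp_quarter: "exp (- w/4) \<le> 2 / sqrt w"
  proof -
    have "exp (- w/4) * sqrt w \<le> 1"
      using sqrt_le_exp_quarter[of w] w by (simp add: exp_minus field_simps)
    thus ?thesis using w by (simp add: field_simps)
  qed
  show ?thesis
  proof (cases "m = 0")
    case True
    have "poisson_mass w m = exp (- w)" using True by (simp add: poisson_mass_def)
    also have "\<dots> \<le> exp (- w/4)" using w by simp
    finally show ?thesis using exp_quarter by linarith
  next
    case False
    define n where "n = real m"
    have n: "1 \<le> n" using False by (simp add: n_def)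
    have ln_mass: "ln (poisson_mass w m) \<le> - w + n * ln (w / n) + n - ln n / 2"
      using ln_poisson_mass_le[OF w] False by (simp add: n_def)
    show ?thesis
    proof (cases "w \<le> 4 * n")
      case True
      have "n * ln (w / n) \<le> n * (w / n - 1)"
        using w n by (intro mult_left_mono ln_le_minus_one) auto
      moreover have "n * (w / n - 1) = w - n" using n by (simp add: field_simps)
      ultimately have "ln (poisson_mass w m) \<le> - (ln n / 2)"
        using ln_mass by linarith
      hence "poisson_mass w m \<le> exp (- (ln n / 2))"
        using poisson_mass_pos[OF w] by (metis exp_le_cancel_iff exp_ln)
      also have "\<dots> = 1 / sqrt n"
        using exp_half_ln[of n] n by (simp add: exp_minus inverse_eq_divide)
      also have "\<dots> \<le> 2 / sqrt w"
        using True n w real_sqrt_le_mono[OF True] by (simp add: real_sqrt_mult field_simps)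
      finally show ?thesis .
    next
      case False
      have "n * ln (w / n) \<le> n * ((w / n) / exp 1)"
        using w n by (intro mult_left_mono ln_le_div_exp_1) auto
      also have "\<dots> \<le> w / 2"
        using w n exp_ge_add_one_self[of 1] by (simp add: field_simps)
      finally have "ln (poisson_mass w m) \<le> - w/4"
        using ln_mass False n ln_ge_zero[of n] by linarith
      hence "poisson_mass w m \<le> exp (- w/4)"
        using poisson_mass_pos[OF w] by (metis exp_le_cancel_iff exp_ln)
      thus ?thesis using exp_quarter by simp
    qed
  qed
qed

lemma poisson_mass_ge:
  assumes w: "0 < w" and m: "1 \<le> m"
  shows "exp (- 3/2 - (real m - w)^2 / w) / sqrt m \<le> poisson_mass w m"
proof -
  define n where "n = real m"
  have n: "1 \<le> n" using m by (simp add: n_def)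
  have "n * ln (n / w) \<le> n * (n / w - 1)"
    using w n by (intro mult_left_mono ln_le_minus_one) auto
  moreover have "- w - n * (n / w - 1) + n = - ((n - w)^2 / w)"
    using w by (simp add: field_simps power2_eq_square)
  ultimately have "- 3/2 - (n - w)^2 / w - ln n / 2 \<le> ln (poisson_mass w m)"
    using ln_poisson_mass_ge[OF w m] unfolding n_def by linarith
  hence "exp (- 3/2 - (n - w)^2 / w - ln n / 2) \<le> poisson_mass w m"
    using poisson_mass_pos[OF w] by (simp add: ln_ge_iff)
  moreover have "exp (- 3/2 - (n - w)^2 / w - ln n / 2) = exp (- 3/2 - (n - w)^2 / w) / sqrt n"
    using exp_half_ln[of n] n by (simp add: exp_diff)
  ultimately show ?thesis by (simp add: n_def)
qed

lemma sum_poisson_mass_le_1: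
  assumes "0 \<le> w" "finite M" shows "(\<Sum>m\<in>M. poisson_mass w m) \<le> 1"
proof -
  have series: "(\<lambda>n. w ^ n / fact n) sums exp w"
    using exp_converges[of w] by (simp add: divide_inverse mult.commute)
  have "(\<Sum>m\<in>M. w ^ m / fact m) \<le> exp w"
    using sum_le_suminf[OF sums_summable[OF series] assms(2)] assms(1) sums_unique[OF series]
    by simp
  hence "exp (- w) * (\<Sum>m\<in>M. w ^ m / fact m) \<le> exp (- w) * exp w"
    by (intro mult_left_mono) auto
  thus ?thesis
    by (simp add: poisson_mass_def sum_distrib_left exp_minus field_simps)
qed

lemma sum_prod_poisson_mass_le_1:
  fixes w :: "'a \<Rightarrow> real" and S :: "('a \<Rightarrow> nat) set"
  assumes "finite I" "finite S" "\<forall>s\<in>S. \<forall>i. i \<notin> I \<longrightarrow> s i = 0" "\<forall>i\<in>I. 0 \<le> w i"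
  shows "(\<Sum>s\<in>S. \<Prod>i\<in>I. poisson_mass (w i) (s i)) \<le> 1"
proof -
  define B where "B i = (\<lambda>s. s i) ` S" for i
  have inj: "inj_on (\<lambda>s. restrict s I) S"
  proof (rule inj_onI, rule ext)
    fix s t i assume st: "s \<in> S" "t \<in> S" and "restrict s I = restrict t I"
    then have "restrict s I i = restrict t I i" by simp
    thus "s i = t i" using assms(3) st by (cases "i \<in> I") (simp, metis)
  qed
  have "(\<Sum>s\<in>S. \<Prod>i\<in>I. poisson_mass (w i) (s i))
      = (\<Sum>t\<in>(\<lambda>s. restrict s I) ` S. \<Prod>i\<in>I. poisson_mass (w i) (t i))"
    by (simp add: sum.reindex[OF inj])
  also have "\<dots> \<le> (\<Sum>t\<in>PiE I B. \<Prod>i\<in>I. poisson_mass (w i) (t i))"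
    using assms by (intro sum_mono2 finite_PiE prod_nonneg poisson_mass_nonneg)
      (auto simp: B_def)
  also have "\<dots> = (\<Prod>i\<in>I. \<Sum>m\<in>B i. poisson_mass (w i) m)"
    using assms by (intro prod_sum_PiE[symmetric]) (auto simp: B_def)
  also have "\<dots> \<le> 1"
    using assms by (intro prod_le_1 conjI sum_nonneg poisson_mass_nonneg sum_poisson_mass_le_1)
      (auto simp: B_def)
  finally show ?thesis .
qed

lemma finite_nat_between: "finite {m::nat. x \<le> real m \<and> real m \<le> w}"
  by (rule finite_subset[of _ "{..nat \<lfloor>w\<rfloor>}"]) (auto simp: le_nat_floor)

lemma sum_poisson_mass_window_ge:
  assumes w: "0 < w" and a: "1 \<le> a" "a \<le> max 1 (sqrt w)"
  shows "exp (-5/2) * a / (2 * max 1 (sqrt w))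
           \<le> (\<Sum>m\<in>{m::nat. w - a \<le> real m \<and> real m \<le> w}. poisson_mass w m)"
proof -
  define W where "W = {m::nat. w - a \<le> real m \<and> real m \<le> w}"
  have sum_mono_W: "(\<Sum>m\<in>F. poisson_mass w m) \<le> (\<Sum>m\<in>W. poisson_mass w m)" if "F \<subseteq> W" for F
    using that w by (intro sum_mono2) (auto simp: W_def finite_nat_between poisson_mass_nonneg)
  show ?thesis
  proof (cases "w \<le> 1")
    case True
    then have "max 1 (sqrt w) = 1" "a = 1" using a w by auto
    then have "exp (-5/2) * a / (2 * max 1 (sqrt w)) \<le> exp (-5/2)" by simp
    also have "\<dots> \<le> poisson_mass w 0" using True by (simp add: poisson_mass_def)
    also have "\<dots> \<le> (\<Sum>m\<in>W. poisson_mass w m)"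
      using sum_mono_W[of "{0}"] True \<open>a = 1\<close> w by (simp add: W_def)
    finally show ?thesis unfolding W_def .
  next
    case False
    then have "1 \<le> sqrt w" by simp
    then have "sqrt w * 1 \<le> sqrt w * sqrt w" by (intro mult_left_mono) auto
    then have sqrt_w: "max 1 (sqrt w) = sqrt w" "a \<le> sqrt w" "sqrt w \<le> w"
      using a w \<open>1 \<le> sqrt w\<close> by auto
    have a_sq: "a^2 \<le> w" using power_mono[OF sqrt_w(2), of 2] a w by simp
    define q where "q = nat \<lfloor>a\<rfloor>"
    define fw where "fw = nat \<lfloor>w\<rfloor>"
    have floor_a: "1 \<le> \<lfloor>a\<rfloor>" "a < \<lfloor>a\<rfloor> + 1" using a by linarith+
    have real_q: "real q = \<lfloor>a\<rfloor>" using a by (simp add: q_def)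
    have q: "1 \<le> q" "real q \<le> a" "a / 2 \<le> real q" "q \<le> fw"
      using real_q floor_a a sqrt_w unfolding fw_def
      by (linarith, linarith, linarith, simp add: q_def nat_mono floor_mono)
    have fw: "real fw \<le> w" "w < real fw + 1" using w unfolding fw_def by linarith+
    define F where "F = {fw + 1 - q..fw}"
    have F_W: "F \<subseteq> W" using q fw by (auto simp: F_def W_def of_nat_diff)
    have mass_F: "exp (-5/2) / sqrt w \<le> poisson_mass w m" if "m \<in> F" for m
    proof -
      have m: "1 \<le> m" "\<bar>real m - w\<bar> \<le> a" "real m \<le> w"
        using that q F_W by (auto simp: F_def W_def)
      have "(real m - w)^2 \<le> a^2" using power_mono[OF m(2), of 2] by simp
      hence "(real m - w)^2 / w \<le> 1" using a_sq w by (simp add: divide_le_eq)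
      hence "exp (-5/2) \<le> exp (- 3/2 - (real m - w)^2 / w)"
        by (simp only: exp_le_cancel_iff)
      hence "exp (-5/2) / sqrt w \<le> exp (- 3/2 - (real m - w)^2 / w) / sqrt m"
        using m by (intro frac_le) auto
      also have "\<dots> \<le> poisson_mass w m" by (rule poisson_mass_ge[OF w m(1)])
      finally show ?thesis .
    qed
    have "exp (-5/2) * a / (2 * max 1 (sqrt w)) = (a/2) * (exp (-5/2) / sqrt w)"
      using sqrt_w by simp
    also have "\<dots> \<le> real q * (exp (-5/2) / sqrt w)" using q w by (intro mult_right_mono) auto
    also have "\<dots> = (\<Sum>m\<in>F. exp (-5/2) / sqrt w)" using q by (simp add: F_def)
    also have "\<dots> \<le> (\<Sum>m\<in>F. poisson_mass w m)" using mass_F by (intro sum_mono) auto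
    also have "\<dots> \<le> (\<Sum>m\<in>W. poisson_mass w m)" using sum_mono_W[OF F_W] .
    finally show ?thesis unfolding W_def .
  qed
qed

lemma poisson_mass_near_mean_ge:
  assumes w: "0 < w0" "w0 \<le> w" and D: "1 \<le> D"
    and near: "\<bar>real m - w\<bar> \<le> D * max 1 (sqrt w)"
  shows "exp (- 3/2 - D^2 * (1 + 1/w0)) / sqrt (1 + D) / max 1 (sqrt w) \<le> poisson_mass w m"
proof -
  define M where "M = max 1 (sqrt w)"
  define \<kappa> where "\<kappa> = exp (- 3/2 - D^2 * (1 + 1/w0)) / sqrt (1 + D)"
  have M: "1 \<le> M" "w \<le> M^2" unfolding M_def using w by (auto simp: max_def)
  have \<kappa>: "0 \<le> \<kappa>" "\<kappa> \<le> exp (- 3/2 - D^2 * (1 + 1/w0))"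
    unfolding \<kappa>_def using D by (auto simp: divide_le_eq mult_le_cancel_left1)
  have sq_dev: "(real m - w)^2 \<le> D^2 * M^2"
    using power_mono[OF near, of 2] by (simp add: M_def power_mult_distrib)
  have "\<kappa> / M \<le> poisson_mass w m"
  proof (cases "m = 0")
    case True
    have "w \<le> D^2"
    proof (cases "w \<le> 1")
      case True thus ?thesis using D by (smt (verit) one_le_power)
    next
      case False
      hence "M^2 = w" using w by (simp add: M_def)
      hence "w^2 \<le> D^2 * w" using sq_dev \<open>m = 0\<close> by simp
      thus ?thesis using w by (simp add: power2_eq_square)
    qed
    moreover have "D^2 \<le> D^2 * (1 + 1/w0)" using w by (simp add: mult_le_cancel_left1)
    ultimately have "exp (- 3/2 - D^2 * (1 + 1/w0)) \<le> exp (- w)"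
      by (subst exp_le_cancel_iff) linarith
    hence "\<kappa> \<le> exp (- w)" using \<kappa>(2) by linarith
    moreover have "\<kappa> / M \<le> \<kappa>" using M \<kappa> by (simp add: divide_le_eq mult_le_cancel_left1)
    ultimately show ?thesis using True by (simp add: poisson_mass_def)
  next
    case False
    have "(real m - w)^2 / w \<le> D^2 * (1 + 1/w0)"
    proof (cases "w \<le> 1")
      case True
      hence "(real m - w)^2 / w \<le> D^2 / w0"
        using sq_dev w by (intro frac_le) (auto simp: M_def)
      also have "\<dots> \<le> D^2 * (1 + 1/w0)" by (simp add: algebra_simps)
      finally show ?thesis .
    next
      case False
      hence "(real m - w)^2 / w \<le> D^2"
        using sq_dev w by (simp add: M_def divide_le_eq)
      also have "\<dots> \<le> D^2 * (1 + 1/w0)" using w by (simp add: mult_le_cancel_left1)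
      finally show ?thesis .
    qed
    moreover have "sqrt m \<le> sqrt (1 + D) * M"
    proof -
      have "D * M \<le> D * M^2" using M D by (intro mult_left_mono) (auto simp: power2_eq_square)
      hence "real m \<le> M^2 + D * M^2" using near M unfolding M_def[symmetric] by linarith
      hence "sqrt m \<le> sqrt ((1 + D) * M^2)" by (simp add: algebra_simps)
      thus ?thesis using M by (simp add: real_sqrt_mult)
    qed
    ultimately have "\<kappa> / M \<le> exp (- 3/2 - (real m - w)^2 / w) / sqrt m"
      unfolding \<kappa>_def using False by (simp only: divide_divide_eq_left) (intro frac_le, auto)
    also have "\<dots> \<le> poisson_mass w m" using False w by (intro poisson_mass_ge) auto
    finally show ?thesis .
  qed
  thus ?thesis unfolding \<kappa>_def M_def .
qed

section \<open>Exponential tilting\<close>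

lemma poisson_mass_tilt:
  "poisson_mass z n
     = exp (- Qf (exp t) * z) * exp (- t * (real n - exp t * z)) * poisson_mass (exp t * z) n"
proof -
  have "exp (- Qf (exp t) * z) * exp (- t * (real n - exp t * z)) * exp (- (exp t * z)) * exp t ^ n
      = exp (- z)"
    by (simp add: Qf_def exp_of_nat_mult[symmetric] exp_add[symmetric] algebra_simps)
  thus ?thesis
    by (simp add: poisson_mass_def power_mult_distrib)
qed

lemma poisson_prob_tilt:
  assumes "(\<Sum>i<k. lam i * (exp (a * lam i) * z i)) = R"
  shows "poisson_prob k z r
    = (\<Prod>i<k. exp (- Qf (exp (a * lam i)) * z i)) * exp (- a * ((\<Sum>i<k. lam i * r i) - R))
      * (\<Prod>i<k. poisson_mass (exp (a * lam i) * z i) (r i))"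
proof -
  have "(\<Prod>i<k. exp (- (a * lam i) * (real (r i) - exp (a * lam i) * z i)))
      = exp (- a * ((\<Sum>i<k. lam i * r i) - (\<Sum>i<k. lam i * (exp (a * lam i) * z i))))"
    by (simp add: exp_sum[symmetric] sum_distrib_left sum_subtractf sum_negf algebra_simps)
  moreover have "poisson_prob k z r = (\<Prod>i<k. exp (- Qf (exp (a * lam i)) * z i)
      * exp (- (a * lam i) * (real (r i) - exp (a * lam i) * z i))
      * poisson_mass (exp (a * lam i) * z i) (r i))"
    unfolding poisson_prob_def poisson_mass_def[symmetric] by (intro prod.cong refl poisson_mass_tilt)
  ultimately show ?thesis by (simp add: prod.distrib assms)
qed

lemma exp_bounds_of_abs_le:
  fixes a x L :: real assumes "\<bar>x\<bar> \<le> L"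
  shows "exp (- L * \<bar>a\<bar>) \<le> exp (- a * x)" and "exp (- a * x) \<le> exp (L * \<bar>a\<bar>)"
proof -
  have "\<bar>a * x\<bar> \<le> L * \<bar>a\<bar>"
    using mult_left_mono[OF assms abs_ge_zero[of a]] by (simp add: abs_mult mult.commute)
  thus "exp (- L * \<bar>a\<bar>) \<le> exp (- a * x)" and "exp (- a * x) \<le> exp (L * \<bar>a\<bar>)"
    by (simp_all add: abs_le_iff)
qed

lemma abs_weighted_sum_HH_le: "r \<in> HH k lam R \<Longrightarrow> \<bar>(\<Sum>i<k. lam i * r i) - R\<bar> \<le> Lam k lam"
  unfolding HH_def by auto

definition Lam_min :: "nat \<Rightarrow> (nat \<Rightarrow> real) \<Rightarrow> real" where
  "Lam_min k lam = Min (lam ` {..<k})"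

locale positive_weights =
  fixes k :: nat and lam :: "nat \<Rightarrow> real"
  assumes k_ge_1: "1 \<le> k" and lam_pos: "\<forall>i<k. 0 < lam i"
begin

lemma lam_le_Lam: "i < k \<Longrightarrow> lam i \<le> Lam k lam"
  unfolding Lam_def by auto

lemma Lam_min_le_lam: "i < k \<Longrightarrow> Lam_min k lam \<le> lam i"
  unfolding Lam_min_def by auto

lemma Lam_min_pos: "0 < Lam_min k lam"
proof -
  have "Lam_min k lam \<in> lam ` {..<k}"
    unfolding Lam_min_def using k_ge_1 by (intro Min_in) (auto simp: lessThan_empty_iff)
  thus ?thesis using lam_pos by auto
qed

lemma Lam_min_le_Lam: "Lam_min k lam \<le> Lam k lam"
  using Lam_min_le_lam[of 0] lam_le_Lam[of 0] k_ge_1 by simp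

lemma Lam_pos: "0 < Lam k lam"
  using Lam_min_pos Lam_min_le_Lam by linarith

lemma finite_HH: "finite (HH k lam R)"
proof -
  define N where "N = nat \<lceil>R / Lam_min k lam\<rceil>"
  have "r i \<le> N" if r: "r \<in> HH k lam R" and i: "i < k" for r i
  proof -
    have "Lam_min k lam * r i \<le> lam i * r i"
      using Lam_min_le_lam[OF i] by (intro mult_right_mono) auto
    also have "\<dots> \<le> (\<Sum>i<k. lam i * r i)"
      using i lam_pos by (intro member_le_sum) auto
    also have "\<dots> \<le> R" using r unfolding HH_def by auto
    finally have "real (r i) \<le> R / Lam_min k lam"
      using Lam_min_pos by (simp add: field_simps)
    thus ?thesis unfolding N_def by linarith
  qed
  then have "HH k lam R \<subseteq> {r. \<forall>i. (i \<in> {..<k} \<longrightarrow> r i \<in> {..N}) \<and> (i \<notin> {..<k} \<longrightarrow> r i = 0)}"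
    unfolding HH_def by auto
  moreover have "finite {r. \<forall>i. (i \<in> {..<k} \<longrightarrow> r i \<in> {..N}) \<and> (i \<notin> {..<k} \<longrightarrow> r i = (0::nat))}"
    by (intro finite_set_of_finite_funs) auto
  ultimately show ?thesis by (rule finite_subset)
qed

lemma alpha_mean_eq:
  assumes z: "\<forall>i<k. 0 < z i" and R: "0 < R"
  shows "(\<Sum>i<k. lam i * exp (alpha k lam z R * lam i) * z i) = R"
proof -
  define F where "F a = (\<Sum>i<k. lam i * exp (a * lam i) * z i)" for a
  have pos: "0 < lam i" "0 < z i" if "i < k" for i using that lam_pos z by auto
  have strict_mono_F: "F a < F b" if "a < b" for a b
    unfolding F_def using k_ge_1 that pos
    by (intro sum_strict_mono) (auto simp: lessThan_empty_iff intro!: mult_strict_right_mono)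
  define hi where "hi = max 0 (ln (R / (lam 0 * z 0)) / lam 0)"
  define lo where "lo = min 0 (ln (R / F 0) / Lam_min k lam)"
  have F0_pos: "0 < F 0"
    unfolding F_def using k_ge_1 pos by (intro sum_pos) (auto simp: lessThan_empty_iff)
  have "R \<le> lam 0 * exp (hi * lam 0) * z 0"
  proof -
    have "ln (R / (lam 0 * z 0)) / lam 0 \<le> hi" unfolding hi_def by simp
    hence "ln (R / (lam 0 * z 0)) \<le> hi * lam 0"
      using pos[of 0] k_ge_1 by (simp add: divide_le_eq)
    hence "exp (ln (R / (lam 0 * z 0))) \<le> exp (hi * lam 0)" by simp
    hence "R / (lam 0 * z 0) \<le> exp (hi * lam 0)" using R pos[of 0] k_ge_1 by simp
    thus ?thesis using pos[of 0] k_ge_1 by (simp add: divide_le_eq algebra_simps)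
  qed
  also have "\<dots> \<le> F hi"
    unfolding F_def using k_ge_1 pos
    by (intro member_le_sum[of 0 "{..<k}" "\<lambda>i. lam i * exp (hi * lam i) * z i"])
      (auto intro!: mult_nonneg_nonneg simp: less_imp_le)
  finally have F_hi: "R \<le> F hi" .
  have "F lo \<le> (\<Sum>i<k. lam i * exp (lo * Lam_min k lam) * z i)"
    unfolding F_def using pos Lam_min_le_lam
    by (intro sum_mono mult_right_mono mult_left_mono)
      (auto simp: lo_def mult_left_mono_neg less_imp_le)
  also have "\<dots> = exp (lo * Lam_min k lam) * F 0"
    unfolding F_def by (simp add: sum_distrib_left algebra_simps)
  also have "\<dots> \<le> exp (ln (R / F 0)) * F 0"
    using F0_pos Lam_min_pos by (simp add: lo_def min_def divide_le_eq field_simps)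
  also have "\<dots> = R" using R F0_pos by simp
  finally have F_lo: "F lo \<le> R" .
  have "continuous_on {lo..hi} F" unfolding F_def by (intro continuous_intros)
  then obtain a where "F a = R"
    using IVT'[of F lo R hi] F_lo F_hi by (force simp: lo_def hi_def)
  moreover have "b = a" if "F b = R" for b
    using strict_mono_F[of a b] strict_mono_F[of b a] that \<open>F a = R\<close>
    by (cases a b rule: linorder_cases) auto
  ultimately have "F (THE a. F a = R) = R" by (rule theI)
  thus ?thesis unfolding alpha_def F_def .
qed

end

section \<open>The upper bound\<close>

lemma card_le_of_coordinate_spread:
  fixes F :: "('a \<Rightarrow> nat) set" and l L :: real
  assumes "finite F" "0 < l" "0 \<le> L"
    and agree: "\<forall>r\<in>F. \<forall>r'\<in>F. \<forall>i. i \<noteq> j \<longrightarrow> r i = r' i"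
    and spread: "\<forall>r\<in>F. \<forall>r'\<in>F. l * (real (r j) - real (r' j)) < L"
  shows "real (card F) \<le> L / l + 1"
proof (cases "F = {}")
  case True
  thus ?thesis using assms by simp
next
  case False
  define V where "V = (\<lambda>r. r j) ` F"
  have "inj_on (\<lambda>r. r j) F"
  proof (rule inj_onI, rule ext)
    fix r r' i assume "r \<in> F" "r' \<in> F" "r j = r' j"
    thus "r i = r' i" using agree by (cases "i = j") auto
  qed
  hence card_F: "card F = card V" unfolding V_def by (simp add: card_image)
  define m0 where "m0 = Min V"
  define q where "q = nat \<lfloor>L / l\<rfloor>"
  have "V \<subseteq> {m0..m0 + q}"
  proof
    fix m assume "m \<in> V"
    moreover have "m0 \<in> V" unfolding m0_def V_def using \<open>finite F\<close> False by (intro Min_in) auto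
    ultimately have "m0 \<le> m" "l * (real m - real m0) < L"
      using spread \<open>finite F\<close> unfolding m0_def V_def by auto
    moreover from this have "real (m - m0) \<le> L / l"
      using \<open>0 < l\<close> by (simp add: of_nat_diff field_simps)
    hence "m - m0 \<le> q" unfolding q_def by (rule le_nat_floor)
    ultimately show "m \<in> {m0..m0 + q}" by simp
  qed
  hence "real (card V) \<le> real q + 1" using card_mono[of "{m0..m0 + q}" V] by simp
  moreover have "real q \<le> L / l" unfolding q_def using assms by simp
  ultimately show ?thesis using card_F by linarith
qed

lemma obtain_argmax_index:
  fixes w :: "nat \<Rightarrow> real" assumes "1 \<le> k"
  obtains j where "j < k" "\<forall>i<k. w i \<le> w j"
proof -
  have "Max (w ` {..<k}) \<in> w ` {..<k}" using assms by (intro Max_in) (auto simp: lessThan_empty_iff)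
  then obtain j where "j < k" "w j = Max (w ` {..<k})" by auto
  thus ?thesis using that by auto
qed

definition upper_const :: "nat \<Rightarrow> (nat \<Rightarrow> real) \<Rightarrow> real" where
  "upper_const k lam = 2 * (Lam k lam / Lam_min k lam + 1) * sqrt (k * Lam k lam)"

locale poisson_means = positive_weights +
  fixes w :: "nat \<Rightarrow> real" and R :: real and j :: nat
  assumes w_pos: "\<forall>i<k. 0 < w i" and mean_eq: "(\<Sum>i<k. lam i * w i) = R"
    and Lam_le_R: "Lam k lam \<le> R"
    and j_less_k: "j < k" and w_le_w_j: "\<forall>i<k. w i \<le> w j"
begin

lemma R_pos: "0 < R"
  using Lam_le_R Lam_pos by linarith

lemma w_j_pos: "0 < w j"
  using w_pos j_less_k by simp

lemma lam_j_pos: "0 < lam j"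
  using lam_pos j_less_k by simp

lemma R_le_w_j: "R \<le> k * Lam k lam * w j"
proof -
  have "R \<le> (\<Sum>i<k. Lam k lam * w j)"
    unfolding mean_eq[symmetric] using lam_le_Lam w_le_w_j lam_pos w_pos Lam_pos
    by (intro sum_mono mult_mono) (auto simp: less_imp_le)
  thus ?thesis by simp
qed

lemma lam_w_j_le_R: "lam j * w j \<le> R"
  unfolding mean_eq[symmetric] using j_less_k lam_pos w_pos
  by (intro member_le_sum) (auto intro: mult_nonneg_nonneg less_imp_le)

lemma inverse_k_le_w_j: "1 / k \<le> w j"
proof -
  have "Lam k lam * 1 \<le> Lam k lam * (k * w j)"
    using R_le_w_j Lam_le_R by (simp add: algebra_simps)
  thus ?thesis using Lam_pos k_ge_1 by (simp add: divide_le_eq mult.commute)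
qed

definition others :: "nat set" where
  "others = {..<k} - {j}"

lemma finite_others: "finite others" and card_others: "card others = k - 1"
  using j_less_k by (auto simp: others_def)

lemma sum_split_j: "(\<Sum>i<k. f i) = f j + (\<Sum>i\<in>others. f i)"
  unfolding others_def using j_less_k by (simp add: sum.remove)

lemma prod_split_j: "(\<Prod>i<k. f i) = f j * (\<Prod>i\<in>others. f i)"
  unfolding others_def using j_less_k by (simp add: prod.remove)

lemma inverse_sqrt_w_j_le: "1 / sqrt (w j) \<le> sqrt (k * Lam k lam) / sqrt R"
proof -
  have "sqrt R \<le> sqrt (k * Lam k lam) * sqrt (w j)"
    using R_le_w_j by (simp add: real_sqrt_mult[symmetric])
  thus ?thesis using w_j_pos R_pos by (simp add: field_simps)
qed

lemma max_1_sqrt_w_j_le: "max 1 (sqrt (w j)) \<le> sqrt R / sqrt (Lam_min k lam)"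
proof -
  have "Lam_min k lam * w j \<le> lam j * w j"
    using Lam_min_le_lam[OF j_less_k] w_j_pos by (intro mult_right_mono) auto
  hence "w j \<le> R / Lam_min k lam"
    using lam_w_j_le_R Lam_min_pos by (simp add: field_simps)
  moreover have "1 \<le> R / Lam_min k lam"
    using Lam_min_le_Lam Lam_le_R Lam_min_pos by (simp add: field_simps)
  ultimately have "max 1 (sqrt (w j)) \<le> sqrt (R / Lam_min k lam)"
    using real_sqrt_le_mono by fastforce
  thus ?thesis by (simp add: real_sqrt_divide)
qed

text \<open>Within a fibre all coordinates but \<open>j\<close> are fixed, so \<open>\<lambda>\<^sub>j r\<^sub>j\<close> ranges over an interval of
  length \<open>\<Lambda>\<close>.\<close>

lemma sum_fibre_poisson_mass_le:
  "(\<Sum>r\<in>{r\<in>HH k lam R. r(j := 0) = t}. poisson_mass (w j) (r j))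
     \<le> (Lam k lam / Lam_min k lam + 1) * (2 / sqrt (w j))"
proof -
  define F where "F = {r\<in>HH k lam R. r(j := 0) = t}"
  have agree: "\<forall>r\<in>F. \<forall>r'\<in>F. \<forall>i. i \<noteq> j \<longrightarrow> r i = r' i"
  proof (intro ballI allI impI)
    fix r r' i assume "r \<in> F" "r' \<in> F" "i \<noteq> j"
    then have "(r(j := 0)) i = (r'(j := 0)) i" by (simp add: F_def)
    thus "r i = r' i" using \<open>i \<noteq> j\<close> by simp
  qed
  have "\<forall>r\<in>F. \<forall>r'\<in>F. lam j * (real (r j) - real (r' j)) < Lam k lam"
  proof (intro ballI)
    fix r r' assume "r \<in> F" "r' \<in> F"
    then have "(\<Sum>i\<in>others. lam i * r i) = (\<Sum>i\<in>others. lam i * r' i)"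
      using agree by (intro sum.cong) (auto simp: others_def)
    moreover have "(\<Sum>i<k. lam i * r i) \<le> R" "R - Lam k lam < (\<Sum>i<k. lam i * r' i)"
      using \<open>r \<in> F\<close> \<open>r' \<in> F\<close> unfolding F_def HH_def by auto
    ultimately show "lam j * (real (r j) - real (r' j)) < Lam k lam"
      unfolding sum_split_j by (simp add: algebra_simps)
  qed
  then have "real (card F) \<le> Lam k lam / lam j + 1"
    using finite_HH[of R] lam_j_pos Lam_pos agree
    by (intro card_le_of_coordinate_spread) (auto simp: F_def)
  also have "\<dots> \<le> Lam k lam / Lam_min k lam + 1"
    using Lam_min_le_lam[OF j_less_k] Lam_min_pos Lam_pos by (simp add: frac_le)
  finally have "real (card F) * (2 / sqrt (w j)) \<le> (Lam k lam / Lam_min k lam + 1) * (2 / sqrt (w j))"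
    using w_j_pos by (intro mult_right_mono) auto
  moreover have "(\<Sum>r\<in>F. poisson_mass (w j) (r j)) \<le> real (card F) * (2 / sqrt (w j))"
    using poisson_mass_le[OF w_j_pos] by (intro sum_bounded_above) auto
  ultimately show ?thesis unfolding F_def by linarith
qed

text \<open>The fibres obtained by fixing all coordinates except the one of largest mean
  each carry mass \<open>O(1/\<surd>w\<^sub>j)\<close>, and the remaining coordinates have total mass at most one.\<close>

lemma sum_HH_poisson_mass_le:
  "(\<Sum>r\<in>HH k lam R. \<Prod>i<k. poisson_mass (w i) (r i)) \<le> upper_const k lam / sqrt R"
proof -
  define drop_j where "drop_j r = r(j := 0)" for r :: "nat \<Rightarrow> nat"
  define H where "H = HH k lam R"
  define B where "B = (Lam k lam / Lam_min k lam + 1) * (2 / sqrt (w j))"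
  have "(\<Sum>r\<in>H. \<Prod>i<k. poisson_mass (w i) (r i))
      = (\<Sum>r\<in>H. poisson_mass (w j) (r j) * (\<Prod>i\<in>others. poisson_mass (w i) (drop_j r i)))"
    unfolding prod_split_j drop_j_def by (intro sum.cong refl prod.cong) (auto simp: others_def)
  also have "\<dots> = (\<Sum>t\<in>drop_j ` H. (\<Prod>i\<in>others. poisson_mass (w i) (t i))
                       * (\<Sum>r\<in>{r\<in>H. drop_j r = t}. poisson_mass (w j) (r j)))"
    using finite_HH[of R] unfolding H_def
    by (subst sum.image_gen[of _ _ drop_j]) (simp_all add: sum_distrib_left mult.commute)
  also have "\<dots> \<le> (\<Sum>t\<in>drop_j ` H. \<Prod>i\<in>others. poisson_mass (w i) (t i)) * B"
    unfolding sum_distrib_right H_def B_def drop_j_def using sum_fibre_poisson_mass_le w_pos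
    by (intro sum_mono mult_left_mono prod_nonneg poisson_mass_nonneg) (auto simp: others_def less_imp_le)
  also have "\<dots> \<le> 1 * B"
  proof (rule mult_right_mono)
    show "(\<Sum>t\<in>drop_j ` H. \<Prod>i\<in>others. poisson_mass (w i) (t i)) \<le> 1"
      using finite_HH[of R] w_pos finite_others
      by (intro sum_prod_poisson_mass_le_1) (auto simp: others_def drop_j_def H_def HH_def less_imp_le)
    show "0 \<le> B" unfolding B_def using Lam_min_pos Lam_pos w_j_pos by simp
  qed
  also have "\<dots> = 2 * (Lam k lam / Lam_min k lam + 1) * (1 / sqrt (w j))" unfolding B_def by simp
  also have "\<dots> \<le> 2 * (Lam k lam / Lam_min k lam + 1) * (sqrt (k * Lam k lam) / sqrt R)"
    using inverse_sqrt_w_j_le Lam_min_pos Lam_pos by (intro mult_left_mono) auto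
  finally show ?thesis by (simp add: H_def upper_const_def)
qed
end

section \<open>The lower bound\<close>

definition HH_near :: "nat \<Rightarrow> (nat \<Rightarrow> real) \<Rightarrow> (nat \<Rightarrow> real) \<Rightarrow> real \<Rightarrow> real \<Rightarrow> (nat \<Rightarrow> nat) set" where
  "HH_near k lam w R \<delta> = {r \<in> HH k lam R. \<forall>i<k.
      \<bar>real (r i) - w i\<bar> \<le> Lam k lam / lam i * max (real k) (\<delta> * sqrt (w i))}"

lemma HHd_eq_HH_near: "HHd k lam z R \<delta> = HH_near k lam (\<lambda>i. exp (alpha k lam z R * lam i) * z i) R \<delta>"
  unfolding HHd_def HH_near_def ..

text \<open>The factor in front of \<open>sqrt (Lam_min k lam)\<close> bounds the mass of the completed coordinate
  below, each of the \<open>k - 1\<close> factors \<open>exp (-5/2) * \<delta> / (2 * k)\<close> the mass of a window.\<close>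

definition lower_const :: "nat \<Rightarrow> (nat \<Rightarrow> real) \<Rightarrow> real \<Rightarrow> real" where
  "lower_const k lam \<delta> =
    (let D = Lam k lam * k / Lam_min k lam
     in exp (- 3/2 - D^2 * (1 + k)) / sqrt (1 + D) * sqrt (Lam_min k lam)
        * (exp (-5/2) * \<delta> / (2 * k)) ^ (k - 1))"

locale poisson_window = poisson_means +
  fixes \<delta> :: real
  assumes \<delta>_pos: "0 < \<delta>" and \<delta>_le_1: "\<delta> \<le> 1"
begin

definition radius :: "nat \<Rightarrow> real" where
  "radius i = max 1 (\<delta> * sqrt (w i) / k)"

definition window :: "nat \<Rightarrow> nat set" where
  "window i = {m. w i - radius i \<le> real m \<and> real m \<le> w i}"

definition deficit :: "(nat \<Rightarrow> nat) \<Rightarrow> real" where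
  "deficit s = R - (\<Sum>i\<in>others. lam i * s i)"

definition completion :: "(nat \<Rightarrow> nat) \<Rightarrow> nat \<Rightarrow> nat" where
  "completion s i = (if i \<in> others then s i else if i = j then nat \<lfloor>deficit s / lam j\<rfloor> else 0)"

lemma finite_window: "finite (window i)"
  unfolding window_def by (rule finite_nat_between)

lemma radius_le: "i < k \<Longrightarrow> radius i \<le> max 1 (\<delta> * sqrt (w j) / k)"
  unfolding radius_def using w_le_w_j \<delta>_pos k_ge_1
  by (intro max.mono divide_right_mono mult_left_mono) auto

lemma deficit_bounds:
  assumes "s \<in> PiE others window"
  shows "lam j * w j \<le> deficit s"
    and "deficit s \<le> lam j * w j + Lam k lam * max k (\<delta> * sqrt (w j))"
proof -
  have in_window: "w i - radius i \<le> s i" "s i \<le> w i" if "i \<in> others" for i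
    using assms that by (auto simp: window_def)
  have lam: "0 < lam i" if "i \<in> others" for i using that lam_pos by (auto simp: others_def)
  have others_mean: "(\<Sum>i\<in>others. lam i * w i) = R - lam j * w j"
    using sum_split_j[of "\<lambda>i. lam i * w i"] mean_eq by simp
  have "(\<Sum>i\<in>others. lam i * s i) \<le> (\<Sum>i\<in>others. lam i * w i)"
    using in_window lam by (intro sum_mono mult_left_mono) (auto simp: less_imp_le)
  thus "lam j * w j \<le> deficit s" using others_mean by (simp add: deficit_def)
  have "(\<Sum>i\<in>others. lam i * (w i - radius i)) \<le> (\<Sum>i\<in>others. lam i * s i)"
    using in_window lam by (intro sum_mono mult_left_mono) (auto simp: less_imp_le)
  moreover have "(\<Sum>i\<in>others. lam i * radius i) \<le> Lam k lam * max k (\<delta> * sqrt (w j))"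
  proof -
    have "(\<Sum>i\<in>others. lam i * radius i) \<le> (\<Sum>i\<in>others. Lam k lam * max 1 (\<delta> * sqrt (w j) / k))"
      using lam_le_Lam radius_le lam Lam_pos
      by (intro sum_mono mult_mono) (auto simp: others_def radius_def less_imp_le)
    also have "\<dots> = Lam k lam * ((k - 1) * max 1 (\<delta> * sqrt (w j) / k))"
      using card_others k_ge_1 by simp
    also have "\<dots> \<le> Lam k lam * max k (\<delta> * sqrt (w j))"
    proof -
      have "(k - 1) * max 1 (\<delta> * sqrt (w j) / k) \<le> k * max 1 (\<delta> * sqrt (w j) / k)"
        by (intro mult_right_mono) auto
      also have "\<dots> = max k (\<delta> * sqrt (w j))"
        using k_ge_1 by (simp add: max_mult_distrib_left)
      finally show ?thesis using Lam_pos by (intro mult_left_mono) auto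
    qed
    finally show ?thesis .
  qed
  ultimately show "deficit s \<le> lam j * w j + Lam k lam * max k (\<delta> * sqrt (w j))"
    using others_mean by (simp add: deficit_def sum_subtractf algebra_simps)
qed

lemma completion_j_bounds:
  assumes "s \<in> PiE others window"
  shows "lam j * completion s j \<le> deficit s" and "deficit s < lam j * completion s j + lam j"
proof -
  have "0 \<le> lam j * w j" using w_j_pos lam_j_pos by simp
  hence "0 \<le> deficit s / lam j"
    using deficit_bounds(1)[OF assms] lam_j_pos by simp
  hence "real (completion s j) = \<lfloor>deficit s / lam j\<rfloor>"
    by (simp add: completion_def others_def)
  hence "real (completion s j) \<le> deficit s / lam j" "deficit s / lam j < completion s j + 1"
    by linarith+
  thus "lam j * completion s j \<le> deficit s" "deficit s < lam j * completion s j + lam j"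
    using lam_j_pos by (simp_all add: field_simps)
qed

lemma completion_mem_HH:
  assumes "s \<in> PiE others window"
  shows "completion s \<in> HH k lam R"
proof -
  have "(\<Sum>i<k. lam i * completion s i) = lam j * completion s j + R - deficit s"
    unfolding sum_split_j deficit_def by (simp add: completion_def)
  moreover have "lam j \<le> Lam k lam" using lam_le_Lam j_less_k by simp
  moreover have "completion s i = 0" if "k \<le> i" for i
    using that j_less_k by (simp add: completion_def others_def)
  ultimately show ?thesis using completion_j_bounds[OF assms] unfolding HH_def by auto
qed

lemma completion_near_mean:
  assumes "s \<in> PiE others window" and i: "i < k"
  shows "\<bar>real (completion s i) - w i\<bar> \<le> Lam k lam / lam i * max k (\<delta> * sqrt (w i))"
proof (cases "i = j")
  case True
  define M where "M = Lam k lam * max k (\<delta> * sqrt (w j))"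
  have "Lam k lam \<le> M"
    using Lam_pos k_ge_1 by (simp add: M_def mult_le_cancel_left1)
  moreover have "lam j \<le> Lam k lam" using lam_le_Lam j_less_k by simp
  ultimately have "\<bar>lam j * (real (completion s j) - w j)\<bar> \<le> M"
    using completion_j_bounds[OF assms(1)] deficit_bounds[OF assms(1)] unfolding M_def[symmetric]
    by (simp add: abs_le_iff algebra_simps)
  hence "lam j * \<bar>real (completion s j) - w j\<bar> \<le> M"
    using lam_j_pos by (simp add: abs_mult)
  thus ?thesis using True lam_j_pos by (simp add: M_def field_simps)
next
  case False
  hence "i \<in> others" using i by (simp add: others_def)
  moreover from this have "s i \<in> window i" using assms(1) by (rule PiE_mem[rotated])
  ultimately have "\<bar>real (completion s i) - w i\<bar> \<le> radius i"
    by (auto simp: completion_def window_def)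
  also have "\<dots> \<le> max k (\<delta> * sqrt (w i))"
    unfolding radius_def using k_ge_1 \<delta>_pos w_pos i
    by (auto simp: max_def divide_le_eq intro: order_trans[of _ "\<delta> * sqrt (w i)"])
  also have "\<dots> \<le> Lam k lam / lam i * max k (\<delta> * sqrt (w i))"
    using lam_le_Lam[OF i] lam_pos i by (intro mult_le_cancel_right1[THEN iffD2]) auto
  finally show ?thesis .
qed

lemma completion_mem_HH_near:
  "s \<in> PiE others window \<Longrightarrow> completion s \<in> HH_near k lam w R \<delta>"
  using completion_mem_HH completion_near_mean by (simp add: HH_near_def)

lemma inj_on_completion: "inj_on completion (PiE others window)"
proof (rule inj_onI, rule ext)
  fix s t i assume "s \<in> PiE others window" "t \<in> PiE others window" "completion s = completion t"
  thus "s i = t i"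
    by (cases "i \<in> others") (auto simp: PiE_def extensional_def dest: fun_cong[of _ _ i] simp: completion_def)
qed

lemma poisson_mass_completion_ge:
  assumes "s \<in> PiE others window"
  defines "D \<equiv> Lam k lam * k / Lam_min k lam"
  shows "exp (- 3/2 - D^2 * (1 + k)) / sqrt (1 + D) / max 1 (sqrt (w j))
           \<le> poisson_mass (w j) (completion s j)"
proof -
  have "\<bar>real (completion s j) - w j\<bar> \<le> Lam k lam / lam j * max k (\<delta> * sqrt (w j))"
    using completion_near_mean[OF assms(1) j_less_k] .
  also have "\<dots> \<le> Lam k lam / Lam_min k lam * (k * max 1 (sqrt (w j)))"
  proof (rule mult_mono)
    show "Lam k lam / lam j \<le> Lam k lam / Lam_min k lam"
      using Lam_min_le_lam[OF j_less_k] Lam_min_pos Lam_pos by (intro divide_left_mono) auto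
    have "\<delta> * sqrt (w j) \<le> sqrt (w j)" using \<delta>_le_1 w_j_pos by (simp add: mult_left_le_one_le)
    also have "\<dots> \<le> k * sqrt (w j)" using k_ge_1 w_j_pos by (simp add: mult_le_cancel_right1)
    finally show "max k (\<delta> * sqrt (w j)) \<le> k * max 1 (sqrt (w j))"
      by (simp add: max_mult_distrib_left)
  qed (use Lam_min_pos Lam_pos in auto)
  also have "\<dots> = D * max 1 (sqrt (w j))" unfolding D_def by simp
  finally have near: "\<bar>real (completion s j) - w j\<bar> \<le> D * max 1 (sqrt (w j))" .
  have "1 \<le> D"
    using Lam_min_le_Lam Lam_min_pos k_ge_1 mult_mono[of "Lam_min k lam" "Lam k lam" 1 "real k"]
    by (simp add: D_def le_divide_eq)
  thus ?thesis
    using poisson_mass_near_mean_ge[OF _ inverse_k_le_w_j _ near] k_ge_1 by simp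
qed

lemma window_mass_ge:
  assumes "i \<in> others"
  shows "exp (-5/2) * \<delta> / (2 * k) \<le> (\<Sum>m\<in>window i. poisson_mass (w i) m)"
proof -
  have w_i: "0 < w i" using assms w_pos by (simp add: others_def)
  have \<delta>_k: "0 < \<delta> / k" "\<delta> / k \<le> 1" using \<delta>_pos \<delta>_le_1 k_ge_1 by (auto simp: divide_le_eq)
  have radius_le: "radius i \<le> max 1 (sqrt (w i))"
    unfolding radius_def using \<delta>_k w_i
    by (intro max.mono) (auto simp: mult_left_le_one_le[of "sqrt (w i)" "\<delta> / k", simplified])
  have "\<delta> / k * max 1 (sqrt (w i)) \<le> radius i"
    unfolding radius_def using \<delta>_k by (auto simp: max_mult_distrib_left)
  have "exp (-5/2) * \<delta> / (2 * k)
      = exp (-5/2) * (\<delta> / k * max 1 (sqrt (w i))) / (2 * max 1 (sqrt (w i)))"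
    using \<delta>_k by (simp add: field_simps max_def)
  also have "\<dots> \<le> exp (-5/2) * radius i / (2 * max 1 (sqrt (w i)))"
    using \<open>\<delta> / k * max 1 (sqrt (w i)) \<le> radius i\<close> by (intro divide_right_mono mult_left_mono) auto
  also have "\<dots> \<le> (\<Sum>m\<in>window i. poisson_mass (w i) m)"
    unfolding window_def by (intro sum_poisson_mass_window_ge w_i radius_le) (simp add: radius_def)
  finally show ?thesis .
qed

lemma sum_completion_le_sum_HH_near:
  "(\<Sum>s\<in>PiE others window. \<Prod>i<k. poisson_mass (w i) (completion s i))
     \<le> (\<Sum>r\<in>HH_near k lam w R \<delta>. \<Prod>i<k. poisson_mass (w i) (r i))"
proof -
  have "(\<Sum>s\<in>PiE others window. \<Prod>i<k. poisson_mass (w i) (completion s i))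
      = (\<Sum>r\<in>completion ` PiE others window. \<Prod>i<k. poisson_mass (w i) (r i))"
    by (simp add: sum.reindex[OF inj_on_completion])
  also have "\<dots> \<le> (\<Sum>r\<in>HH_near k lam w R \<delta>. \<Prod>i<k. poisson_mass (w i) (r i))"
  proof (rule sum_mono2)
    show "finite (HH_near k lam w R \<delta>)"
      using finite_HH[of R] by (rule finite_subset[rotated]) (auto simp: HH_near_def)
    show "completion ` PiE others window \<subseteq> HH_near k lam w R \<delta>"
      using completion_mem_HH_near by blast
    show "0 \<le> (\<Prod>i<k. poisson_mass (w i) (r i))" for r
      using w_pos by (intro prod_nonneg poisson_mass_nonneg) (simp add: less_imp_le)
  qed
  finally show ?thesis .
qed

text \<open>Distinct window tuples complete to distinct points of \<open>HH_near\<close>; the windows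
  contribute a factor \<open>\<gg> \<delta>/k\<close> each and the completed coordinate one of order \<open>1/\<surd>w\<^sub>j \<gg> 1/\<surd>R\<close>.\<close>

lemma sum_HH_near_poisson_mass_ge:
  "lower_const k lam \<delta> / sqrt R \<le> (\<Sum>r\<in>HH_near k lam w R \<delta>. \<Prod>i<k. poisson_mass (w i) (r i))"
proof -
  define D where "D = Lam k lam * k / Lam_min k lam"
  define \<kappa> where "\<kappa> = exp (- 3/2 - D^2 * (1 + k)) / sqrt (1 + D)"
  define M where "M = max 1 (sqrt (w j))"
  define c where "c = exp (-5/2) * \<delta> / (2 * k)"
  have "0 \<le> c" using \<delta>_pos by (simp add: c_def)
  have "0 \<le> \<kappa>" using Lam_pos Lam_min_pos by (simp add: \<kappa>_def D_def)
  have "lower_const k lam \<delta> / sqrt R = \<kappa> / (sqrt R / sqrt (Lam_min k lam)) * c ^ (k - 1)"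
    unfolding lower_const_def Let_def \<kappa>_def D_def c_def by simp
  also have "\<dots> \<le> \<kappa> / M * c ^ (k - 1)"
    using max_1_sqrt_w_j_le \<open>0 \<le> c\<close> \<open>0 \<le> \<kappa>\<close> R_pos Lam_min_pos
    by (intro mult_right_mono divide_left_mono) (auto simp: M_def)
  also have "\<dots> \<le> \<kappa> / M * (\<Prod>i\<in>others. \<Sum>m\<in>window i. poisson_mass (w i) m)"
  proof (rule mult_left_mono)
    have "c ^ (k - 1) = (\<Prod>i\<in>others. c)" using card_others by simp
    also have "\<dots> \<le> (\<Prod>i\<in>others. \<Sum>m\<in>window i. poisson_mass (w i) m)"
      using window_mass_ge \<open>0 \<le> c\<close> by (intro prod_mono) (auto simp: c_def)
    finally show "c ^ (k - 1) \<le> (\<Prod>i\<in>others. \<Sum>m\<in>window i. poisson_mass (w i) m)" .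
    show "0 \<le> \<kappa> / M" using \<open>0 \<le> \<kappa>\<close> by (simp add: M_def)
  qed
  also have "\<dots> = (\<Sum>s\<in>PiE others window. \<kappa> / M * (\<Prod>i\<in>others. poisson_mass (w i) (s i)))"
    by (simp add: prod_sum_PiE finite_others finite_window sum_distrib_left)
  also have "\<dots> \<le> (\<Sum>s\<in>PiE others window. \<Prod>i<k. poisson_mass (w i) (completion s i))"
  proof (rule sum_mono)
    fix s assume s: "s \<in> PiE others window"
    have completion_j: "\<kappa> / M \<le> poisson_mass (w j) (completion s j)"
      unfolding \<kappa>_def M_def D_def by (rule poisson_mass_completion_ge[OF s])
    have "(\<Prod>i\<in>others. poisson_mass (w i) (completion s i)) = (\<Prod>i\<in>others. poisson_mass (w i) (s i))"
      by (intro prod.cong) (auto simp: completion_def)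
    moreover have "0 \<le> (\<Prod>i\<in>others. poisson_mass (w i) (s i))"
      using w_pos by (intro prod_nonneg poisson_mass_nonneg) (auto simp: others_def less_imp_le)
    ultimately show "\<kappa> / M * (\<Prod>i\<in>others. poisson_mass (w i) (s i))
        \<le> (\<Prod>i<k. poisson_mass (w i) (completion s i))"
      unfolding prod_split_j using mult_right_mono[OF completion_j] by simp
  qed
  also have "\<dots> \<le> (\<Sum>r\<in>HH_near k lam w R \<delta>. \<Prod>i<k. poisson_mass (w i) (r i))"
    by (rule sum_completion_le_sum_HH_near)
  finally show ?thesis .
qed

end

context positive_weights
begin

lemma upper_const_pos: "0 < upper_const k lam"
  unfolding upper_const_def using Lam_pos Lam_min_pos k_ge_1 by (simp add: add_pos_pos)

lemma lower_const_pos: "0 < \<delta> \<Longrightarrow> 0 < lower_const k lam \<delta>"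
  unfolding lower_const_def Let_def using Lam_pos Lam_min_pos k_ge_1
  by (intro mult_pos_pos divide_pos_pos zero_less_power) (auto intro!: add_pos_nonneg)

lemma Prob_tilt_bounds:
  assumes z: "\<forall>i<k. 0 < z i" and R: "0 < R" and A: "A \<subseteq> HH k lam R"
  defines "a \<equiv> alpha k lam z R"
  defines "E \<equiv> (\<Prod>i<k. exp (- Qf (exp (a * lam i)) * z i))"
    and "P \<equiv> \<lambda>r. \<Prod>i<k. poisson_mass (exp (a * lam i) * z i) (r i)"
  shows "E * exp (- Lam k lam * \<bar>a\<bar>) * (\<Sum>r\<in>A. P r) \<le> Prob k z A"
    and "Prob k z A \<le> E * exp (Lam k lam * \<bar>a\<bar>) * (\<Sum>r\<in>A. P r)"
proof -
  have "(\<Sum>i<k. lam i * (exp (a * lam i) * z i)) = R"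
    using alpha_mean_eq[OF z R] by (simp add: a_def mult.assoc)
  hence Prob_eq: "Prob k z A = (\<Sum>r\<in>A. E * exp (- a * ((\<Sum>i<k. lam i * r i) - R)) * P r)"
    unfolding Prob_def E_def P_def by (intro sum.cong refl poisson_prob_tilt)
  have nonneg: "0 \<le> E" "0 \<le> P r" for r
    using z by (auto simp: E_def P_def less_imp_le intro!: prod_nonneg poisson_mass_nonneg)
  have weight: "exp (- Lam k lam * \<bar>a\<bar>) \<le> exp (- a * ((\<Sum>i<k. lam i * r i) - R))"
    "exp (- a * ((\<Sum>i<k. lam i * r i) - R)) \<le> exp (Lam k lam * \<bar>a\<bar>)" if "r \<in> A" for r
    using exp_bounds_of_abs_le[OF abs_weighted_sum_HH_le] that A by blast+
  show "E * exp (- Lam k lam * \<bar>a\<bar>) * (\<Sum>r\<in>A. P r) \<le> Prob k z A"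
    unfolding Prob_eq sum_distrib_left using weight nonneg
    by (intro sum_mono mult_right_mono mult_left_mono) auto
  show "Prob k z A \<le> E * exp (Lam k lam * \<bar>a\<bar>) * (\<Sum>r\<in>A. P r)"
    unfolding Prob_eq sum_distrib_left using weight nonneg
    by (intro sum_mono mult_right_mono mult_left_mono) auto
qed

lemma poisson_means_alpha:
  assumes z: "\<forall>i<k. 0 < z i" and R: "Lam k lam \<le> R"
    and j: "j < k" "\<forall>i<k. exp (alpha k lam z R * lam i) * z i \<le> exp (alpha k lam z R * lam j) * z j"
  shows "poisson_means k lam (\<lambda>i. exp (alpha k lam z R * lam i) * z i) R j"
proof
  show "(\<Sum>i<k. lam i * (exp (alpha k lam z R * lam i) * z i)) = R"
    using alpha_mean_eq[OF z] R Lam_pos by (simp add: mult.assoc)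
qed (use z R j k_ge_1 lam_pos in auto)

lemma Prob_HH_le:
  assumes z: "\<forall>i<k. 0 < z i" and R: "Lam k lam \<le> R"
  shows "Prob k z (HH k lam R)
    \<le> upper_const k lam * (exp (Lam k lam * \<bar>alpha k lam z R\<bar>) / sqrt R
          * (\<Prod>i<k. exp (- Qf (exp (alpha k lam z R * lam i)) * z i)))"
proof -
  define w where "w i = exp (alpha k lam z R * lam i) * z i" for i
  obtain j where "j < k" "\<forall>i<k. w i \<le> w j" using obtain_argmax_index[OF k_ge_1] .
  then interpret poisson_means k lam w R j
    unfolding w_def by (rule poisson_means_alpha[OF z R])
  define E where "E = (\<Prod>i<k. exp (- Qf (exp (alpha k lam z R * lam i)) * z i))"
  have "0 \<le> E" unfolding E_def by (intro prod_nonneg) auto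
  have "Prob k z (HH k lam R)
      \<le> E * exp (Lam k lam * \<bar>alpha k lam z R\<bar>) * (\<Sum>r\<in>HH k lam R. \<Prod>i<k. poisson_mass (w i) (r i))"
    using Prob_tilt_bounds(2)[OF z R_pos subset_refl] by (simp add: E_def w_def)
  also have "\<dots> \<le> E * exp (Lam k lam * \<bar>alpha k lam z R\<bar>) * (upper_const k lam / sqrt R)"
    using sum_HH_poisson_mass_le \<open>0 \<le> E\<close> by (intro mult_left_mono) auto
  finally show ?thesis by (simp add: E_def mult_ac)
qed

lemma Prob_HHd_ge:
  assumes z: "\<forall>i<k. 0 < z i" and R: "Lam k lam \<le> R" and \<delta>: "0 < \<delta>" "\<delta> \<le> 1"
  shows "lower_const k lam \<delta> * (exp (- Lam k lam * \<bar>alpha k lam z R\<bar>) / sqrt R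
          * (\<Prod>i<k. exp (- Qf (exp (alpha k lam z R * lam i)) * z i)))
         \<le> Prob k z (HHd k lam z R \<delta>)"
proof -
  define w where "w i = exp (alpha k lam z R * lam i) * z i" for i
  obtain j where "j < k" "\<forall>i<k. w i \<le> w j" using obtain_argmax_index[OF k_ge_1] .
  then interpret poisson_means k lam w R j
    unfolding w_def by (rule poisson_means_alpha[OF z R])
  interpret poisson_window k lam w R j \<delta>
    using poisson_means_axioms \<delta> by (simp add: poisson_window_def poisson_window_axioms_def)
  define E where "E = (\<Prod>i<k. exp (- Qf (exp (alpha k lam z R * lam i)) * z i))"
  have "0 \<le> E" unfolding E_def by (intro prod_nonneg) auto
  have HHd: "HHd k lam z R \<delta> = HH_near k lam w R \<delta>"
    unfolding HHd_eq_HH_near w_def ..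
  have "lower_const k lam \<delta> * (exp (- Lam k lam * \<bar>alpha k lam z R\<bar>) / sqrt R * E)
      = E * exp (- Lam k lam * \<bar>alpha k lam z R\<bar>) * (lower_const k lam \<delta> / sqrt R)"
    by simp
  also have "\<dots> \<le> E * exp (- Lam k lam * \<bar>alpha k lam z R\<bar>)
                    * (\<Sum>r\<in>HH_near k lam w R \<delta>. \<Prod>i<k. poisson_mass (w i) (r i))"
    using sum_HH_near_poisson_mass_ge \<open>0 \<le> E\<close> by (intro mult_left_mono) auto
  also have "\<dots> \<le> Prob k z (HHd k lam z R \<delta>)"
    using Prob_tilt_bounds(1)[OF z R_pos, of "HHd k lam z R \<delta>"]
    by (simp add: HHd E_def w_def HH_near_def)
  finally show ?thesis unfolding E_def .
qed

end

theorem lemma4p2: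
  fixes k :: nat and lam :: "nat \<Rightarrow> real"
  assumes "k \<ge> 1" and "\<forall>i<k. lam i > 0"
  shows "\<exists>c::real.
    (\<forall>\<delta>::real. 0 < \<delta> \<and> \<delta> \<le> 1 \<longrightarrow>
      (\<exists>C>0. \<forall>(z::nat \<Rightarrow> real) (R::real).
        (\<forall>i<k. z i \<ge> 1) \<longrightarrow> R \<ge> max (Lam k lam) (\<delta> * (\<Sum>i<k. z i)) \<longrightarrow>
        Prob k z (HHd k lam z R \<delta>) \<ge>
          C * (exp (- c * \<bar>alpha k lam z R\<bar>) / sqrt R *
            (\<Prod>i<k. exp (- Qf (exp (alpha k lam z R * lam i)) * z i))))) \<and>
    (\<exists>C>0. \<forall>(z::nat \<Rightarrow> real) (R::real).
        (\<forall>i<k. z i \<ge> 1) \<longrightarrow> R \<ge> Lam k lam \<longrightarrow>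
        Prob k z (HH k lam R) \<le>
          C * (exp (c * \<bar>alpha k lam z R\<bar>) / sqrt R *
            (\<Prod>i<k. exp (- Qf (exp (alpha k lam z R * lam i)) * z i))))"
proof -
  \<comment> \<open>The lower bound holds for every \<open>R \<ge> \<Lambda>\<close>.\<close>
  interpret positive_weights k lam using assms by unfold_locales
  have z_pos: "\<forall>i<k. 0 < z i" if "\<forall>i<k. z i \<ge> 1" for z :: "nat \<Rightarrow> real"
    using that by (auto intro: less_le_trans[OF zero_less_one])
  show ?thesis
  proof (rule exI[of _ "Lam k lam"], intro conjI allI impI)
    fix \<delta> :: real assume "0 < \<delta> \<and> \<delta> \<le> 1"
    then show "\<exists>C>0. \<forall>z R. (\<forall>i<k. z i \<ge> 1) \<longrightarrow> R \<ge> max (Lam k lam) (\<delta> * (\<Sum>i<k. z i)) \<longrightarrow>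
        Prob k z (HHd k lam z R \<delta>) \<ge> C * (exp (- Lam k lam * \<bar>alpha k lam z R\<bar>) / sqrt R *
            (\<Prod>i<k. exp (- Qf (exp (alpha k lam z R * lam i)) * z i)))"
      using lower_const_pos Prob_HHd_ge z_pos by (intro exI[of _ "lower_const k lam \<delta>"]) auto
  next
    show "\<exists>C>0. \<forall>z R. (\<forall>i<k. z i \<ge> 1) \<longrightarrow> R \<ge> Lam k lam \<longrightarrow>
        Prob k z (HH k lam R) \<le> C * (exp (Lam k lam * \<bar>alpha k lam z R\<bar>) / sqrt R *
            (\<Prod>i<k. exp (- Qf (exp (alpha k lam z R * lam i)) * z i)))"
      using upper_const_pos Prob_HH_le z_pos by (intro exI[of _ "upper_const k lam"]) auto
  qed
qed

end
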